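(* Let $t\in\mathbb{R}$ and $m\in\mathbb{N}$. Define polynomials $B_n(t,m;x)$ by $$\sum_{n=0}^\infty B_n(t,m;x)\frac{z^n}{n!}=\left(\frac{z^m/m!}{e^z-\sum_{k=0}^{m-1}z^k/k!}\right)^te^{xz}$$ for $z$ in a neighborhood of $0$. Then for every $n\in\mathbb{N}_0$, $$B_n(t,m;0)=\sum_{k=0}^n\binom{-t}{k}\binom{n+t}{n-k}C(m,n,k),\qquad C(m,n,k)=n!\,(m!)^k\sum_{j_1+\cdots+j_k=n}\frac{1}{(m+j_1)!\cdots(m+j_k)!},$$ where the sum runs over $(j_1,\ldots,j_k)\in\mathbb{N}_0^k$ (for $k=0$, $C(m,n,0)=\delta_{n0}$). *)

theory Defs
  imports "HOL-Computational_Algebra.Formal_Power_Series" "HOL-Library.FuncSet"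
begin

text \<open>The formal power series of z^m/m! / (e^z - sum_{k<m} z^k/k!).
  Its constant coefficient is 1.\<close>
definition ratio_fps :: "nat \<Rightarrow> real fps" where
  "ratio_fps m = (fps_X ^ m / fps_const (fact m)) /
      (fps_exp 1 - (\<Sum>k<m. fps_X ^ k / fps_const (fact k)))"

text \<open>Real power F^a of a power series F with constant term 1:
  the binomial series (1+w)^a = sum (a gchoose k) w^k composed with w = F - 1.\<close>
definition fps_powr_real :: "real fps \<Rightarrow> real \<Rightarrow> real fps" where
  "fps_powr_real F a = fps_compose (fps_binomial a) (F - 1)"

definition Bpoly :: "nat \<Rightarrow> real \<Rightarrow> nat \<Rightarrow> real \<Rightarrow> real" where
  "Bpoly n t m x = fact n * fps_nth (fps_powr_real (ratio_fps m) t * fps_exp x) n"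

definition Ccoef :: "nat \<Rightarrow> nat \<Rightarrow> nat \<Rightarrow> real" where
  "Ccoef m n k = fact n * (fact m) ^ k *
     (\<Sum>j\<in>{j \<in> {0..<k} \<rightarrow>\<^sub>E {0..n}. (\<Sum>i<k. j i) = n}.
        1 / (\<Prod>i<k. fact (m + j i)))"

end

theory Submission
  imports Defs
begin

unbundle fps_syntax

text \<open>
  Write \<open>R = ratio_fps m\<close> and \<open>G = 1 / R = \<Sum>\<^sub>j m!/(m+j)! z\<^sup>j\<close>, so that
  \<open>C(m,n,k) = n! [z\<^sup>n] G\<^sup>k = n! [z\<^sup>n] R\<^sup>-\<^sup>k\<close>. Expanding both \<open>R\<^sup>t\<close> and \<open>R\<^sup>-\<^sup>k\<close> as binomial
  series in \<open>R - 1\<close>, the coefficient of \<open>z\<^sup>n\<close> involves only the powers \<open>(R - 1)\<^sup>i\<close>, \<open>i \<le> n\<close>,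
  weighted by \<open>t gchoose i\<close> resp. \<open>-k gchoose i\<close>. The claim therefore reduces to the identity
  \<open>\<Sum>\<^sub>k w\<^sub>k p(k) = p(-t)\<close> for the weights \<open>w\<^sub>k = (-t gchoose k)(n+t gchoose n-k)\<close> and every
  polynomial \<open>p\<close> of degree at most \<open>n\<close>, applied to \<open>p(x) = -x gchoose i\<close>; on the basis
  \<open>p(x) = x gchoose j\<close> it is a Vandermonde convolution.
\<close>

lemma sum_gbinomial_weights_gchoose:
  fixes a :: "'a::field_char_0"
  assumes "j \<le> n"
  shows "(\<Sum>k=0..n. (a gchoose k) * ((of_nat n - a) gchoose (n - k)) * (of_nat k gchoose j))
    = a gchoose j"
proof -
  have "(\<Sum>k=0..n. (a gchoose k) * ((of_nat n - a) gchoose (n - k)) * (of_nat k gchoose j))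
      = (\<Sum>k=j..n. (a gchoose k) * ((of_nat n - a) gchoose (n - k)) * (of_nat k gchoose j))"
  proof -
    have "{0..n} = {0..<j} \<union> {j..n}" using assms by auto
    moreover have "(\<Sum>k=0..<j. (a gchoose k) * ((of_nat n - a) gchoose (n - k)) * (of_nat k gchoose j)) = 0"
      by (intro sum.neutral ballI) (simp add: binomial_gbinomial[symmetric])
    ultimately show ?thesis by (subst \<open>{0..n} = _\<close>, subst sum.union_disjoint) auto
  qed
  also have "\<dots> = (\<Sum>k=j..n. (a gchoose j) * ((a - of_nat j) gchoose (k - j)) * ((of_nat n - a) gchoose (n - k)))"
    by (intro sum.cong refl) (simp add: gbinomial_trinomial_revision mult_ac)
  also have "\<dots> = (\<Sum>l=0..n-j. (a gchoose j) * ((a - of_nat j) gchoose l) * ((of_nat n - a) gchoose (n - j - l)))"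
    using assms by (intro sum.reindex_bij_witness[of _ "\<lambda>l. l + j" "\<lambda>k. k - j"]) auto
  also have "\<dots> = (a gchoose j) * (\<Sum>l=0..n-j. ((a - of_nat j) gchoose l) * ((of_nat n - a) gchoose (n - j - l)))"
    by (simp add: sum_distrib_left mult_ac)
  also have "\<dots> = (a gchoose j) * ((a - of_nat j + (of_nat n - a)) gchoose (n - j))"
    by (subst gbinomial_Vandermonde) simp
  also have "a - of_nat j + (of_nat n - a) = (of_nat (n - j) :: 'a)"
    using assms by (simp add: of_nat_diff)
  finally show ?thesis by (simp add: binomial_gbinomial[symmetric])
qed

lemma gbinomial_minus_eq_sum:
  fixes x :: "'a::field_char_0"
  shows "(- x) gchoose i = (-1) ^ i * (\<Sum>j=0..i. (x gchoose j) * ((of_nat i - 1) gchoose (i - j)))"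
proof -
  have "(- x) gchoose i = (-1) ^ i * ((x + (of_nat i - 1)) gchoose i)"
    by (subst gbinomial_negated_upper) (simp add: algebra_simps)
  also have "\<dots> = (-1) ^ i * (\<Sum>j=0..i. (x gchoose j) * ((of_nat i - 1) gchoose (i - j)))"
    by (subst gbinomial_Vandermonde) simp
  finally show ?thesis .
qed

lemma sum_gbinomial_weights_gchoose_minus:
  fixes a :: "'a::field_char_0"
  assumes "i \<le> n"
  shows "(\<Sum>k=0..n. (a gchoose k) * ((of_nat n - a) gchoose (n - k)) * ((- of_nat k) gchoose i))
    = (- a) gchoose i"
proof -
  have "(\<Sum>k=0..n. (a gchoose k) * ((of_nat n - a) gchoose (n - k)) * ((- of_nat k) gchoose i))
     = (-1) ^ i * (\<Sum>j=0..i. ((of_nat i - 1) gchoose (i - j)) *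
          (\<Sum>k=0..n. (a gchoose k) * ((of_nat n - a) gchoose (n - k)) * (of_nat k gchoose j)))"
    by (simp add: gbinomial_minus_eq_sum sum_distrib_left sum_distrib_right mult_ac
        sum.swap[of _ "{0..i}"])
  also have "\<dots> = (-1) ^ i * (\<Sum>j=0..i. ((of_nat i - 1) gchoose (i - j)) * (a gchoose j))"
    using assms by (simp add: sum_gbinomial_weights_gchoose)
  also have "\<dots> = (- a) gchoose i"
    by (simp add: gbinomial_minus_eq_sum[of a] mult_ac)
  finally show ?thesis .
qed

lemma sum_gbinomial_weights_gchoose_minus_combination:
  fixes a :: "'a::field_char_0"
  shows "(\<Sum>k=0..n. (a gchoose k) * ((of_nat n - a) gchoose (n - k)) * (\<Sum>i=0..n. ((- of_nat k) gchoose i) * e i))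
    = (\<Sum>i=0..n. ((- a) gchoose i) * e i)"
proof -
  have "(\<Sum>k=0..n. (a gchoose k) * ((of_nat n - a) gchoose (n - k)) * (\<Sum>i=0..n. ((- of_nat k) gchoose i) * e i))
      = (\<Sum>k=0..n. \<Sum>i=0..n. (a gchoose k) * ((of_nat n - a) gchoose (n - k)) * ((- of_nat k) gchoose i) * e i)"
    by (simp only: sum_distrib_left mult.assoc)
  also have "\<dots> = (\<Sum>i=0..n. (\<Sum>k=0..n. (a gchoose k) * ((of_nat n - a) gchoose (n - k)) * ((- of_nat k) gchoose i)) * e i)"
    by (subst sum.swap) (simp only: sum_distrib_right)
  finally show ?thesis by (simp add: sum_gbinomial_weights_gchoose_minus)
qed

definition exp_remainder_fps :: "nat \<Rightarrow> real fps" where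
  "exp_remainder_fps m = Abs_fps (\<lambda>j. fact m / fact (m + j))"

lemma exp_remainder_fps_nth_0 [simp]: "exp_remainder_fps m $ 0 = 1"
  by (simp add: exp_remainder_fps_def)

lemma fps_exp_minus_partial_sum:
  "fps_exp 1 - (\<Sum>k<m. fps_X ^ k / fps_const (fact k))
    = fps_X ^ m * (fps_const (1 / fact m) * exp_remainder_fps m)"
proof (rule fps_ext)
  fix n
  have "fps_X ^ k / fps_const (fact k) = fps_const (1 / fact k) * (fps_X ^ k :: real fps)" for k
    by (simp add: fps_divide_unit fps_const_inverse mult_ac inverse_eq_divide)
  then have "(\<Sum>k<m. fps_X ^ k / fps_const (fact k)) $ n = (\<Sum>k<m. if n = k then 1 / fact k else (0::real))"
    unfolding fps_sum_nth by (intro sum.cong refl) (simp add: fps_X_power_nth)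
  also have "\<dots> = (if n < m then 1 / fact n else 0)"
    by simp
  finally have partial_sum_nth: "(\<Sum>k<m. fps_X ^ k / fps_const (fact k)) $ n
      = (if n < m then 1 / fact n else 0 :: real)" .
  show "(fps_exp 1 - (\<Sum>k<m. fps_X ^ k / fps_const (fact k))) $ n
      = (fps_X ^ m * (fps_const (1 / fact m) * exp_remainder_fps m)) $ n"
    by (simp only: fps_sub_nth partial_sum_nth) (simp add: fps_X_power_mult_nth exp_remainder_fps_def)
qed

lemma ratio_fps_eq_inverse: "ratio_fps m = inverse (exp_remainder_fps m)"
proof -
  define P :: "real fps" where "P = fps_X ^ m * fps_const (1 / fact m)"
  have "P \<noteq> 0" by (simp add: P_def)
  have P_eq: "fps_X ^ m / fps_const (fact m) = P"
    by (simp add: P_def fps_divide_unit fps_const_inverse inverse_eq_divide)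
  have "ratio_fps m = P / (P * exp_remainder_fps m)"
    unfolding ratio_fps_def fps_exp_minus_partial_sum P_eq by (simp add: P_def mult.assoc)
  also have "\<dots> = 1 / exp_remainder_fps m"
    using div_mult_mult1[OF \<open>P \<noteq> 0\<close>, of 1] by simp
  finally show ?thesis by (simp add: fps_divide_unit)
qed

lemma fps_binomial_minus_of_nat_compose_inverse:
  fixes G :: "'a::field_char_0 fps"
  assumes "G $ 0 = 1"
  shows "fps_binomial (- of_nat k) oo (inverse G - 1) = G ^ k"
proof -
  have W0: "(inverse G - 1) $ 0 = 0" using assms by simp
  have "fps_binomial (- of_nat k) oo (inverse G - 1) = inverse (((1 + fps_X) oo (inverse G - 1)) ^ k)"
    using W0 by (simp add: fps_binomial_minus_of_nat fps_inverse_compose fps_compose_power)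
  also have "(1 + fps_X) oo (inverse G - 1) = inverse G"
    using W0 by (simp add: fps_compose_add_distrib)
  finally show ?thesis
    using assms by (simp add: fps_inverse_power)
qed

lemma fps_power_nth_eq_if_nth_eq:
  fixes F G :: "'a::comm_semiring_1 fps"
  assumes "\<And>i. i \<le> n \<Longrightarrow> F $ i = G $ i"
  shows "i \<le> n \<Longrightarrow> (F ^ k) $ i = (G ^ k) $ i"
proof (induction k arbitrary: i)
  case (Suc k)
  then show ?case using assms by (auto simp: fps_mult_nth intro!: sum.cong)
qed simp

lemma fps_const_prod: "fps_const (prod f A) = (\<Prod>x\<in>A. fps_const (f x) :: 'a::comm_ring_1 fps)"
  by (induction A rule: infinite_finite_induct) (simp_all flip: fps_const_mult)

lemma fps_power_nth_PiE:
  fixes F :: "'a::comm_ring_1 fps"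
  shows "(F ^ k) $ n = (\<Sum>j\<in>{j \<in> {0..<k} \<rightarrow>\<^sub>E {0..n}. (\<Sum>i<k. j i) = n}. \<Prod>i<k. F $ j i)"
proof -
  \<comment> \<open>Truncating \<open>F\<close> at degree \<open>n\<close> makes the product of sums finite, so \<open>prod_sum_PiE\<close> applies.\<close>
  define T where "T = (\<Sum>y\<in>{0..n}. fps_const (F $ y) * fps_X ^ y)"
  have "T $ i = F $ i" if "i \<le> n" for i
    using that by (simp add: T_def fps_sum_nth fps_X_power_nth if_distrib[where f="\<lambda>x. _ * x"] cong: if_cong)
  then have "(F ^ k) $ n = (T ^ k) $ n"
    using fps_power_nth_eq_if_nth_eq[of n T F] by simp
  also have "T ^ k = (\<Sum>g\<in>{0..<k} \<rightarrow>\<^sub>E {0..n}. \<Prod>x\<in>{0..<k}. fps_const (F $ g x) * fps_X ^ g x)"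
    unfolding T_def by (subst prod_sum_PiE[symmetric]) auto
  also have "\<dots> = (\<Sum>g\<in>{0..<k} \<rightarrow>\<^sub>E {0..n}. fps_const (\<Prod>x\<in>{0..<k}. F $ g x) * fps_X ^ (\<Sum>x\<in>{0..<k}. g x))"
    by (simp add: prod.distrib fps_const_prod power_sum)
  also have "\<dots> $ n = (\<Sum>g\<in>{0..<k} \<rightarrow>\<^sub>E {0..n}. if (\<Sum>x\<in>{0..<k}. g x) = n then \<Prod>x\<in>{0..<k}. F $ g x else 0)"
    unfolding fps_sum_nth by (intro sum.cong refl) (simp add: fps_X_power_nth)
  also have "\<dots> = (\<Sum>j\<in>{j \<in> {0..<k} \<rightarrow>\<^sub>E {0..n}. (\<Sum>i<k. j i) = n}. \<Prod>i<k. F $ j i)"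
    unfolding atLeast0LessThan by (simp add: sum.inter_filter finite_PiE)
  finally show ?thesis .
qed

lemma Ccoef_eq_power_nth: "Ccoef m n k = fact n * (exp_remainder_fps m ^ k) $ n"
  by (simp add: Ccoef_def fps_power_nth_PiE exp_remainder_fps_def sum_distrib_left prod_dividef)

theorem corollary4p1:
  fixes t :: real and m n :: nat
  assumes "m \<ge> 1"
  shows "Bpoly n t m 0 =
    (\<Sum>k=0..n. ((- t) gchoose k) * ((real n + t) gchoose (n - k)) * Ccoef m n k)"
proof -
  define e where "e i = ((ratio_fps m - 1) ^ i) $ n" for i
  have Ccoef_eq: "Ccoef m n k = fact n * (\<Sum>i=0..n. ((- of_nat k) gchoose i) * e i)" for k
    by (simp add: Ccoef_eq_power_nth ratio_fps_eq_inverse e_def fps_compose_nth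
        flip: fps_binomial_minus_of_nat_compose_inverse[OF exp_remainder_fps_nth_0])
  have "(\<Sum>k=0..n. ((- t) gchoose k) * ((real n + t) gchoose (n - k)) * Ccoef m n k)
      = fact n * (\<Sum>k=0..n. ((- t) gchoose k) * ((real n + t) gchoose (n - k))
          * (\<Sum>i=0..n. ((- of_nat k) gchoose i) * e i))"
    by (simp add: Ccoef_eq sum_distrib_left mult_ac)
  also have "\<dots> = fact n * (\<Sum>i=0..n. (t gchoose i) * e i)"
    using sum_gbinomial_weights_gchoose_minus_combination[of "- t" n e] by simp
  also have "\<dots> = Bpoly n t m 0"
    by (simp add: Bpoly_def fps_powr_real_def fps_compose_nth e_def)
  finally show ?thesis ..
qed

end
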